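(* Let $q$ be a positive integer and $I\subseteq\{0,1,\dots,q-1\}$, with complement $I^c=\{0,1,\dots,q-1\}\setminus I$. Let $k_1,k_2\ge0$, $p_i\ge 0$ ($1\le i\le k_1$), $q_i\ge0$ ($1\le i\le k_2$) be integers and $s_i,a_{ij},t_i,b_{ij},a,\nu$ integers (empty sums are $0$). Let $B(n)=\lceil n/q\rceil$. Then $$B(n)=\sum_{i=1}^{k_1}B\Big(n-s_i-\sum_{j=1}^{p_i}B(n-a_{ij})\Big)+\sum_{i=1}^{k_2}B\Big(-t_i+\sum_{j=1}^{q_i}B(n-b_{ij})\Big)+B\Big(n-a-\sum_{j\in I}B(n-j)\Big)+\nu$$ holds for all integers $n$ if and only if $$B(n)=\sum_{i=1}^{k_1}B\Big(n-s_i-\sum_{j=1}^{p_i}B(n-a_{ij})\Big)+\sum_{i=1}^{k_2}B\Big(-t_i+\sum_{j=1}^{q_i}B(n-b_{ij})\Big)+B\Big(-a+\sum_{j\in I^c}B(n-j)\Big)+\nu$$ holds for all integers $n$.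
   Context: Equivalently: $\lceil n/q\rceil$ formally satisfies the first recursion (with a Conolly-type term $R(n-a-\sum_{j\in I}R(n-j))$) if and only if it formally satisfies the second (with the Conway-type term $R(-a+\sum_{j\notin I}R(n-j))$), where formal satisfaction means the equation holds for all integers $n$ after substituting $\lceil \cdot/q\rceil$ for $R$. *)

theory Defs
  imports Complex_Main
begin

definition B :: "int \<Rightarrow> int \<Rightarrow> int" where
  "B q n = \<lceil>real_of_int n / real_of_int q\<rceil>"

end

theory Submission
  imports Defs
begin

text \<open>The ceiling function satisfies the Hermite-type identity
  \<open>\<Sum>j\<in>{0..<q}. \<lceil>(n - j)/q\<rceil> = n\<close>. Splitting this sum along \<open>I\<close> and its complement
  shows that \<open>n - a - \<Sum>j\<in>I. B(n - j)\<close> and \<open>-a + \<Sum>j\<in>I\<^sup>c. B(n - j)\<close> are the same integer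
  for every \<open>n\<close>, so the two recursions coincide term by term.\<close>

lemma B_add_modulus:
  assumes "q > 0"
  shows "B q (n + q) = B q n + 1"
proof -
  have "real_of_int (n + q) / real_of_int q = real_of_int n / real_of_int q + 1"
    using assms by (simp add: field_simps)
  then show ?thesis
    unfolding B_def by simp
qed

lemma B_neg_eq_0:
  assumes "q > 0" and "0 \<le> j" and "j < q"
  shows "B q (- j) = 0"
proof -
  have "real_of_int (- j) / real_of_int q \<le> 0"
    using assms by (simp add: divide_le_0_iff)
  moreover have "- 1 < real_of_int (- j) / real_of_int q"
    using assms by (simp add: field_simps)
  ultimately show ?thesis
    unfolding B_def by (simp add: ceiling_eq_iff)
qed

lemma sum_B_window_succ:
  assumes q: "q > 0"
  shows "(\<Sum>j\<in>{0..<q}. B q (n + 1 - j)) = (\<Sum>j\<in>{0..<q}. B q (n - j)) + 1"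
proof -
  have shift: "(\<Sum>j\<in>{1..<q}. B q (n + 1 - j)) = (\<Sum>j\<in>{0..<q - 1}. B q (n - j))"
    by (rule sum.reindex_bij_witness[of _ "\<lambda>j. j + 1" "\<lambda>j. j - 1"]) (auto simp: algebra_simps)
  have "(\<Sum>j\<in>{0..<q}. B q (n + 1 - j)) = B q (n + 1) + (\<Sum>j\<in>{1..<q}. B q (n + 1 - j))"
  proof -
    have "{0..<q} = insert 0 {1..<q}"
      using q by auto
    then show ?thesis
      by simp
  qed
  also have "\<dots> = B q (n - (q - 1)) + 1 + (\<Sum>j\<in>{0..<q - 1}. B q (n - j))"
    using B_add_modulus[OF q, of "n - (q - 1)"] by (simp add: shift)
  also have "\<dots> = (\<Sum>j\<in>{0..<q}. B q (n - j)) + 1"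
  proof -
    have "{0..<q} = insert (q - 1) {0..<q - 1}"
      using q by auto
    then show ?thesis
      by simp
  qed
  finally show ?thesis .
qed

lemma sum_B_window:
  assumes q: "q > 0"
  shows "(\<Sum>j\<in>{0..<q}. B q (n - j)) = n"
proof (induction n rule: int_induct[where k = 0])
  case base
  have "(\<Sum>j\<in>{0..<q}. B q (0 - j)) = (\<Sum>j\<in>{0..<q}. 0)"
    by (rule sum.cong) (use q B_neg_eq_0 in auto)
  then show ?case
    by simp
next
  case (step1 n)
  then show ?case
    using sum_B_window_succ[OF q, of n] by simp
next
  case (step2 n)
  then show ?case
    using sum_B_window_succ[OF q, of "n - 1"] by simp
qed

lemma diff_sum_B_eq_sum_B_complement:
  assumes q: "q > 0" and I: "I \<subseteq> {0..<q}"
  shows "n - a - (\<Sum>j\<in>I. B q (n - j)) = - a + (\<Sum>j\<in>{0..<q} - I. B q (n - j))"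
proof -
  have "(\<Sum>j\<in>{0..<q}. B q (n - j)) = (\<Sum>j\<in>I. B q (n - j)) + (\<Sum>j\<in>{0..<q} - I. B q (n - j))"
    using sum.subset_diff[OF I] by (simp add: add.commute)
  then show ?thesis
    using sum_B_window[OF q, of n] by simp
qed

theorem theorem7:
  fixes q :: int and I :: "int set"
    and k1 k2 :: nat and p qq :: "nat \<Rightarrow> nat"
    and s t :: "nat \<Rightarrow> int" and aa bb :: "nat \<Rightarrow> nat \<Rightarrow> int"
    and a \<nu> :: int
  assumes "q > 0"
    and "I \<subseteq> {0..<q}"
  shows "(\<forall>n::int. B q n =
            (\<Sum>i=1..k1. B q (n - s i - (\<Sum>j=1..p i. B q (n - aa i j))))
          + (\<Sum>i=1..k2. B q (- t i + (\<Sum>j=1..qq i. B q (n - bb i j))))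
          + B q (n - a - (\<Sum>j\<in>I. B q (n - j))) + \<nu>)
     \<longleftrightarrow>
         (\<forall>n::int. B q n =
            (\<Sum>i=1..k1. B q (n - s i - (\<Sum>j=1..p i. B q (n - aa i j))))
          + (\<Sum>i=1..k2. B q (- t i + (\<Sum>j=1..qq i. B q (n - bb i j))))
          + B q (- a + (\<Sum>j\<in>{0..<q} - I. B q (n - j))) + \<nu>)"
  by (simp only: diff_sum_B_eq_sum_B_complement[OF assms])

end
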